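(* Let $z_1,z_2\in W^+(\Omega)$ and let $Q$ be an open subset of $\Omega$ with $\overline{Q}\subset\Omega$, $z_1<z_2$ in $Q$ and $z_1=z_2$ on $\partial Q$. Assume that for every $\boldsymbol{x}_Q\in\partial\overline{Q}$ there is $r>0$ with $\overline{B_r(\boldsymbol{x}_Q)}\subset\Omega$ and $z_1\ge z_2$ in $B_r(\boldsymbol{x}_Q)\setminus\overline{Q}$. If there exists $\boldsymbol{x}_0\in\partial\overline{Q}$ such that $z_2$ is differentiable at $\boldsymbol{x}_0$ and $\nabla z_2(\boldsymbol{x}_0)\notin\partial z_1(\boldsymbol{x}_0)$, then $$\int_{\partial z_1(\overline{Q})}R(\boldsymbol{p})\,d\boldsymbol{p}\ >\ \int_{\partial z_2(\overline{Q})}R(\boldsymbol{p})\,d\boldsymbol{p}.$$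
   Context: $\Omega\subset\mathbb{R}^d$ is a bounded open convex domain and $W^+(\Omega)$ denotes the set of convex real-valued functions on $\Omega$. $R:\mathbb{R}^d\to(0,\infty)$ is locally integrable with $R>0$ everywhere. For $u\in W^+(\Omega)$ and $\boldsymbol{x}\in\Omega$, $\partial u(\boldsymbol{x})=\{\boldsymbol{p}\in\mathbb{R}^d:\ u(\boldsymbol{y})\ge u(\boldsymbol{x})+\boldsymbol{p}\cdot(\boldsymbol{y}-\boldsymbol{x})\ \forall \boldsymbol{y}\in \Omega\}$ and $\partial u(E)=\bigcup_{\boldsymbol{x}\in E}\partial u(\boldsymbol{x})$. $\partial\overline Q$ denotes the topological boundary of $\overline Q$; $B_r(\boldsymbol{x})$ is the open ball of radius $r$ centered at $\boldsymbol{x}$. *)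

theory Defs
  imports "HOL-Analysis.Analysis"
begin

definition subdiff :: "'a::euclidean_space set \<Rightarrow> ('a \<Rightarrow> real) \<Rightarrow> 'a \<Rightarrow> 'a set" where
  "subdiff \<Omega> u x = {p. \<forall>y\<in>\<Omega>. u y \<ge> u x + p \<bullet> (y - x)}"

definition subdiff_set :: "'a::euclidean_space set \<Rightarrow> ('a \<Rightarrow> real) \<Rightarrow> 'a set \<Rightarrow> 'a set" where
  "subdiff_set \<Omega> u E = (\<Union>x\<in>E. subdiff \<Omega> u x)"

definition locally_integrable :: "('a::euclidean_space \<Rightarrow> real) \<Rightarrow> bool" where
  "locally_integrable R \<longleftrightarrow> (\<forall>K. compact K \<longrightarrow> R integrable_on K)"

end

theory Submission
  imports Defs
begin

text \<open>Every slope of z2 on closure Q is a slope of z1 there: for p \<in> \<partial>z2(x), the minimiser of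
  z1 - p over closure Q is a local minimiser in \<Omega> (on the boundary because z1 \<ge> z2 just outside
  Q and z2 lies above its supporting plane), hence p \<in> \<partial>z1. The inclusion is strict by an open
  set of slopes. Since g \<notin> \<partial>z1(x0), z1 dips below the tangent plane of z2 at x0 somewhere in
  closure Q, so every slope close to g is attained by z1 at an interior point of Q. On the other
  hand, differentiability forces \<partial>z2(x0) = {g}, and this excludes every slope on the open segment
  from g to a subgradient q \<in> \<partial>z1(x0) from \<partial>z2(closure Q). As \<partial>z2(closure Q) is compact and
  R > 0, the open set of slopes near g outside it carries positive R-mass.\<close>

lemma has_derivative_ray_quotient:
  fixes f :: "'a::euclidean_space \<Rightarrow> real"
  assumes "(f has_derivative (\<lambda>h. g \<bullet> h)) (at x)"
  shows "((\<lambda>s. (f (x + s *\<^sub>R v) - f x) / s) \<longlongrightarrow> g \<bullet> v) (at_right 0)"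
proof -
  have "((\<lambda>s::real. x + s *\<^sub>R v) has_derivative (\<lambda>s. s *\<^sub>R v)) (at 0)"
    by (auto intro!: derivative_eq_intros)
  from has_derivative_compose[OF this, of f "\<lambda>h. g \<bullet> h"] assms
  have "((\<lambda>s. f (x + s *\<^sub>R v)) has_derivative (\<lambda>s. s * (g \<bullet> v))) (at 0)"
    by simp
  moreover have "(\<lambda>s. s * (g \<bullet> v)) = (*) (g \<bullet> v)" by (simp add: fun_eq_iff)
  ultimately have "((\<lambda>s. f (x + s *\<^sub>R v)) has_field_derivative (g \<bullet> v)) (at 0)"
    by (simp add: has_field_derivative_def)
  then have "((\<lambda>s. (f (x + s *\<^sub>R v) - f x) / s) \<longlongrightarrow> g \<bullet> v) (at 0)"
    by (simp add: has_field_derivative_iff)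
  then show ?thesis
    by (rule tendsto_mono[OF at_le[OF subset_UNIV]])
qed

lemma local_min_imp_subdiff:
  fixes f :: "'a::euclidean_space \<Rightarrow> real"
  assumes cf: "convex_on S f" and "convex S" and x: "x \<in> S" "x \<in> interior T"
    and min: "\<And>y. y \<in> S \<inter> T \<Longrightarrow> f x - p \<bullet> x \<le> f y - p \<bullet> y"
  shows "p \<in> subdiff S f x"
  unfolding subdiff_def
proof clarify
  obtain e where "e > 0" and e: "ball x e \<subseteq> T" using x(2) mem_interior by blast
  fix y assume y: "y \<in> S"
  show "f x + p \<bullet> (y - x) \<le> f y"
  proof (cases "y = x")
    case False
    then have ny: "norm (y - x) > 0" by simp
    define u where "u = min 1 (e / (2 * norm (y - x)))"
    have u: "0 < u" "u \<le> 1" using \<open>e > 0\<close> ny by (auto simp: u_def)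
    define z where "z = (1 - u) *\<^sub>R x + u *\<^sub>R y"
    have zx: "z - x = u *\<^sub>R (y - x)" by (simp add: z_def algebra_simps)
    have "z \<in> S" using convexD[OF \<open>convex S\<close> x(1) y, of "1 - u" u] u by (simp add: z_def)
    moreover have "z \<in> T"
    proof -
      have "dist z x = u * norm (y - x)" using zx u by (simp add: dist_norm)
      also have "\<dots> \<le> e / 2"
        using ny mult_right_mono[of u "e / (2 * norm (y - x))" "norm (y - x)"] by (simp add: u_def)
      finally show ?thesis using \<open>e > 0\<close> e by (auto simp: dist_commute)
    qed
    ultimately have "f x + p \<bullet> (z - x) \<le> f z" using min[of z] by (simp add: inner_diff_right)
    then have "f x + u * (p \<bullet> (y - x)) \<le> f z" using zx by simp
    moreover have "f z \<le> (1 - u) * f x + u * f y"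
      unfolding z_def using u x y by (intro convex_onD[OF cf]) auto
    ultimately have "u * (f x + p \<bullet> (y - x)) \<le> u * f y" by (simp add: algebra_simps)
    then show ?thesis using u by simp
  qed simp
qed

lemma gradient_in_subdiff:
  fixes f :: "'a::euclidean_space \<Rightarrow> real"
  assumes cf: "convex_on S f" and "convex S" and x: "x \<in> S"
    and d: "(f has_derivative (\<lambda>h. g \<bullet> h)) (at x)"
  shows "g \<in> subdiff S f x"
  unfolding subdiff_def
proof clarify
  fix y assume y: "y \<in> S"
  have "\<forall>\<^sub>F s in at_right 0. (f (x + s *\<^sub>R (y - x)) - f x) / s \<le> f y - f x"
    using eventually_at_right_real[OF zero_less_one]
  proof (rule eventually_mono)
    fix s :: real assume s: "s \<in> {0<..<1}"
    have "f ((1 - s) *\<^sub>R x + s *\<^sub>R y) \<le> (1 - s) * f x + s * f y"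
      using s x y by (intro convex_onD[OF cf]) auto
    moreover have "(1 - s) *\<^sub>R x + s *\<^sub>R y = x + s *\<^sub>R (y - x)" by (simp add: algebra_simps)
    ultimately have "f (x + s *\<^sub>R (y - x)) - f x \<le> s * (f y - f x)" by (simp add: algebra_simps)
    then show "(f (x + s *\<^sub>R (y - x)) - f x) / s \<le> f y - f x"
      using s by (simp add: divide_le_eq mult.commute)
  qed
  then have "g \<bullet> (y - x) \<le> f y - f x"
    using tendsto_le[OF _ tendsto_const has_derivative_ray_quotient[OF d]] by simp
  then show "f x + g \<bullet> (y - x) \<le> f y" by simp
qed

lemma subdiff_imp_gradient:
  fixes f :: "'a::euclidean_space \<Rightarrow> real"
  assumes d: "(f has_derivative (\<lambda>h. g \<bullet> h)) (at x)" and "open S" "x \<in> S"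
    and p: "p \<in> subdiff S f x"
  shows "p = g"
proof -
  define v where "v = p - g"
  obtain e where e: "e > 0" "ball x e \<subseteq> S" using \<open>open S\<close> \<open>x \<in> S\<close> open_contains_ball by blast
 have pos: "0 < e / (norm v + 1)" using \<open>e > 0\<close> by (simp add: add_nonneg_pos)
  have "\<forall>\<^sub>F s in at_right 0. p \<bullet> v \<le> (f (x + s *\<^sub>R v) - f x) / s"
    using eventually_at_right_real[OF pos]
  proof (rule eventually_mono)
    fix s :: real assume s: "s \<in> {0<..<e / (norm v + 1)}"
    then have "s * (norm v + 1) < e" by (simp add: less_divide_eq add_nonneg_pos)
    then have "norm (s *\<^sub>R v) < e" using s by (simp add: algebra_simps)
    then have "x + s *\<^sub>R v \<in> S" using e by (auto simp: dist_norm)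
    then have "s * (p \<bullet> v) \<le> f (x + s *\<^sub>R v) - f x" using p by (auto simp: subdiff_def)
    then show "p \<bullet> v \<le> (f (x + s *\<^sub>R v) - f x) / s"
      using s by (simp add: le_divide_eq mult.commute)
  qed
  then have "p \<bullet> v \<le> g \<bullet> v"
    using tendsto_le[OF _ has_derivative_ray_quotient[OF d] tendsto_const] by simp
  then have "v \<bullet> v \<le> 0" by (simp add: v_def inner_diff_left)
  then have "v = 0" by (metis inner_eq_zero_iff inner_ge_zero order_antisym)
  then show ?thesis by (simp add: v_def)
qed

lemma subdiff_eq_gradient:
  fixes f :: "'a::euclidean_space \<Rightarrow> real"
  assumes "convex_on S f" "convex S" "open S" "x \<in> S"
    and "(f has_derivative (\<lambda>h. g \<bullet> h)) (at x)"
  shows "subdiff S f x = {g}"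
  using assms gradient_in_subdiff subdiff_imp_gradient by blast

lemma convex_strict_epigraph:
  fixes f :: "'a::real_vector \<Rightarrow> real"
  assumes cf: "convex_on S f" and "convex S"
  shows "convex {(y, s). y \<in> S \<and> f y < s}"
proof (rule convexI, clarsimp)
  fix y1 s1 y2 s2 and u v :: real
  assume 1: "y1 \<in> S" "f y1 < s1" and 2: "y2 \<in> S" "f y2 < s2"
    and uv: "0 \<le> u" "0 \<le> v" "u + v = 1"
  have "u * f y1 + v * f y2 < u * s1 + v * s2"
  proof (cases "u = 0")
    case False
    then show ?thesis
      using 1 2 uv mult_strict_left_mono[of "f y1" s1 u] mult_left_mono[of "f y2" s2 v]
      by (simp add: add_less_le_mono)
  qed (use uv 2 in simp)
  moreover have "f (u *\<^sub>R y1 + v *\<^sub>R y2) \<le> u * f y1 + v * f y2"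
    using convex_onD[OF cf, of v y1 y2] 1 2 uv by (simp add: eq_diff_eq[symmetric])
  ultimately show "u *\<^sub>R y1 + v *\<^sub>R y2 \<in> S \<and> f (u *\<^sub>R y1 + v *\<^sub>R y2) < u * s1 + v * s2"
    using convexD[OF \<open>convex S\<close> 1(1) 2(1) uv] by simp
qed

lemma subdiff_nonempty:
  fixes f :: "'a::euclidean_space \<Rightarrow> real"
  assumes cf: "convex_on S f" and "convex S" "open S" and x: "x \<in> S"
  shows "subdiff S f x \<noteq> {}"
proof -
  define E where "E = (\<lambda>z. z - (x, f x)) ` {(y, s). y \<in> S \<and> f y < s}"
  have "convex E"
    unfolding E_def by (intro convex_translation_subtract convex_strict_epigraph cf \<open>convex S\<close>)
  moreover have "0 \<notin> E" by (auto simp: E_def zero_prod_def)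
  ultimately obtain a1 a2 where a: "(a1, a2) \<noteq> 0" and "\<forall>z\<in>E. 0 \<le> (a1, a2) \<bullet> z"
    using separating_hyperplane_set_0 by (metis surj_pair)
  then have sep: "0 \<le> a1 \<bullet> (y - x) + a2 * (s - f x)" if "y \<in> S" "f y < s" for y s
    using that by (force simp: E_def)
  have "0 \<le> a2" using sep[OF x, of "f x + 1"] by simp
  moreover have "a2 \<noteq> 0"
  proof
    assume "a2 = 0"
    then have "a1 \<noteq> 0" using a by (simp add: zero_prod_def)
    obtain e where e: "e > 0" "ball x e \<subseteq> S" using \<open>open S\<close> x open_contains_ball by blast
    define y where "y = x - (e / (2 * norm a1)) *\<^sub>R a1"
    have "y \<in> S" using e \<open>a1 \<noteq> 0\<close> by (auto simp: y_def dist_norm)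
    from sep[OF this, of "f y + 1"] \<open>a2 = 0\<close> have "0 \<le> - (e / (2 * norm a1)) * (a1 \<bullet> a1)"
      by (simp add: y_def)
    moreover have "a1 \<bullet> a1 > 0" using \<open>a1 \<noteq> 0\<close> by simp
    ultimately show False using e \<open>a1 \<noteq> 0\<close> by (auto simp: divide_le_0_iff mult_le_0_iff)
  qed
  ultimately have "a2 > 0" by simp
  have "- (1 / a2) *\<^sub>R a1 \<in> subdiff S f x"
    unfolding subdiff_def
  proof clarify
    fix y assume "y \<in> S"
    have "0 \<le> a1 \<bullet> (y - x) + a2 * (f y - f x) + e" if "e > 0" for e
      using sep[OF \<open>y \<in> S\<close>, of "f y + e / a2"] that \<open>a2 > 0\<close> by (simp add: algebra_simps)
    then have "0 \<le> a1 \<bullet> (y - x) + a2 * (f y - f x)"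
      by (rule field_le_epsilon)
    then show "f x + - (1 / a2) *\<^sub>R a1 \<bullet> (y - x) \<le> f y"
      using \<open>a2 > 0\<close> by (simp add: field_simps)
  qed
  then show ?thesis by blast
qed

lemma subdiff_set_closed:
  fixes f :: "'a::euclidean_space \<Rightarrow> real"
  assumes K: "compact K" "K \<subseteq> S" and "open S" and cont: "continuous_on S f"
  shows "closed (subdiff_set S f K)"
  unfolding closed_sequential_limits
proof clarify
  fix P :: "nat \<Rightarrow> 'a" and p
  assume P: "\<forall>n. P n \<in> subdiff_set S f K" and "P \<longlonglongrightarrow> p"
  then have "\<forall>n. \<exists>x. x \<in> K \<and> P n \<in> subdiff S f x" unfolding subdiff_set_def by blast
  then obtain X where X: "\<And>n. X n \<in> K" "\<And>n. P n \<in> subdiff S f (X n)" by metis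
  obtain l r where l: "l \<in> K" "strict_mono (r :: nat \<Rightarrow> nat)" "(X \<circ> r) \<longlonglongrightarrow> l"
    using seq_compactE[OF compact_imp_seq_compact[OF K(1)], of X] X(1) by blast
  have "isCont f l" using cont \<open>open S\<close> l(1) K(2) by (auto simp: continuous_on_eq_continuous_at)
  have "p \<in> subdiff S f l"
    unfolding subdiff_def
  proof clarify
    fix y assume "y \<in> S"
    have "(\<lambda>n. f (X (r n)) + P (r n) \<bullet> (y - X (r n))) \<longlonglongrightarrow> f l + p \<bullet> (y - l)"
      using l(3) LIMSEQ_subseq_LIMSEQ[OF \<open>P \<longlonglongrightarrow> p\<close> l(2)] unfolding o_def
      by (intro tendsto_add tendsto_inner tendsto_diff tendsto_const isCont_tendsto_compose[OF \<open>isCont f l\<close>])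
    moreover have "\<forall>n. f (X (r n)) + P (r n) \<bullet> (y - X (r n)) \<le> f y"
      using X(2) \<open>y \<in> S\<close> unfolding subdiff_def by blast
    ultimately show "f l + p \<bullet> (y - l) \<le> f y"
      by (intro tendsto_le[OF trivial_limit_sequentially tendsto_const]) auto
  qed
  then show "p \<in> subdiff_set S f K" using l(1) unfolding subdiff_set_def by blast
qed

text \<open>Testing a subgradient p at x with the point x + e p / |p| bounds |p| by the oscillation
  of f over a compact e-neighbourhood of K.\<close>
lemma subdiff_set_bounded:
  fixes f :: "'a::euclidean_space \<Rightarrow> real"
  assumes K: "compact K" "K \<subseteq> S" and "open S" and cont: "continuous_on S f"
  shows "bounded (subdiff_set S f K)"
proof -
  obtain e where e: "e > 0" "(\<Union>x\<in>K. cball x e) \<subseteq> S"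
    using compact_subset_open_imp_cball_epsilon_subset[OF K(1) \<open>open S\<close> K(2)] by blast
  define C where "C = {x + y | x y. x \<in> K \<and> y \<in> cball 0 e}"
  have "compact C" unfolding C_def by (rule compact_sums[OF K(1)]) simp
  have CS: "C \<subseteq> S"
  proof
    fix z assume "z \<in> C"
    then obtain x y where "z = x + y" "x \<in> K" "y \<in> cball 0 e" unfolding C_def by blast
    then show "z \<in> S" using e(2) by (force simp: dist_norm)
  qed
  have "compact (f ` C)" by (rule compact_continuous_image[OF continuous_on_subset[OF cont CS] \<open>compact C\<close>])
  then obtain M where M: "\<And>z. z \<in> C \<Longrightarrow> norm (f z) \<le> M"
    using compact_imp_bounded bounded_iff by (metis imageI)
  have "norm p \<le> 2 * M / e" if p: "p \<in> subdiff_set S f K" for p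
  proof -
    obtain x where x: "x \<in> K" "p \<in> subdiff S f x" using p unfolding subdiff_set_def by blast
    define y where "y = x + (e / norm p) *\<^sub>R p"
    have "x \<in> C" unfolding C_def using x e by force
    have "y \<in> C" unfolding C_def y_def using x e by force
    have "e * norm p \<le> f y - f x"
    proof -
      have "f x + p \<bullet> (y - x) \<le> f y" using x \<open>y \<in> C\<close> CS unfolding subdiff_def by blast
      moreover have "p \<bullet> (y - x) = e * norm p"
        by (cases "p = 0") (simp_all add: y_def power2_norm_eq_inner[symmetric] power2_eq_square)
      ultimately show ?thesis by simp
    qed
    also have "\<dots> \<le> 2 * M" using M[OF \<open>y \<in> C\<close>] M[OF \<open>x \<in> C\<close>] by (simp add: abs_le_iff)
    finally show "norm p \<le> 2 * M / e" using e by (simp add: pos_le_divide_eq mult.commute)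
  qed
  then show ?thesis by (meson bounded_iff)
qed

lemma locally_integrable_set_integrable:
  fixes R :: "'a::euclidean_space \<Rightarrow> real"
  assumes "locally_integrable R" "\<And>p. R p \<ge> 0" "bounded S" "S \<in> sets lebesgue"
  shows "set_integrable lebesgue S R"
proof -
  have "R integrable_on closure S"
    using assms(1,3) compact_closure unfolding locally_integrable_def by blast
  then have "set_integrable lebesgue (closure S) R"
    using nonnegative_absolutely_integrable_1 assms(2) by blast
  then show ?thesis
    using set_integrable_subset assms(4) closure_subset by blast
qed

lemma set_integrable_nn_integral_finite:
  fixes R :: "'a \<Rightarrow> real"
  assumes "set_integrable M S R"
  shows "(\<lambda>p. ennreal (R p) * indicator S p) \<in> borel_measurable M"
    and "(\<integral>\<^sup>+ p. ennreal (R p) * indicator S p \<partial>M) < \<infinity>"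
proof -
  have int: "integrable M (\<lambda>p. indicator S p * R p)"
    using assms by (simp add: set_integrable_def)
  have eq: "ennreal (R p) * indicator S p = ennreal (indicator S p * R p)" for p
    by (cases "p \<in> S") auto
  show "(\<lambda>p. ennreal (R p) * indicator S p) \<in> borel_measurable M"
    unfolding eq using borel_measurable_integrable[OF int] by measurable
  have "(\<integral>\<^sup>+ p. ennreal (R p) * indicator S p \<partial>M) \<le> (\<integral>\<^sup>+ p. norm (indicator S p * R p) \<partial>M)"
    by (intro nn_integral_mono) (auto simp: indicator_def intro: ennreal_leI)
  also have "\<dots> < \<infinity>" using int by (simp add: integrable_iff_bounded)
  finally show "(\<integral>\<^sup>+ p. ennreal (R p) * indicator S p \<partial>M) < \<infinity>" .
qed

lemma nn_integral_ball_pos: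
  fixes R :: "'a::euclidean_space \<Rightarrow> real"
  assumes "locally_integrable R" "\<And>p. R p > 0" "e > 0"
  shows "(\<integral>\<^sup>+ p. ennreal (R p) * indicator (ball c e) p \<partial>lebesgue) > 0"
proof (rule ccontr)
  have "set_integrable lebesgue (ball c e) R"
    using assms by (intro locally_integrable_set_integrable) (auto intro: less_imp_le)
  then have meas: "(\<lambda>p. ennreal (R p) * indicator (ball c e) p) \<in> borel_measurable lebesgue"
    by (rule set_integrable_nn_integral_finite)
  assume "\<not> ?thesis"
  then have "AE p in lebesgue. ennreal (R p) * indicator (ball c e) p = 0"
    using nn_integral_0_iff_AE[OF meas] by simp
  then have "AE p in lebesgue. p \<notin> ball c e"
  proof (rule eventually_mono)
    fix p assume "ennreal (R p) * indicator (ball c e) p = 0"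
    then show "p \<notin> ball c e" using assms(2)[of p] by (auto simp: indicator_def)
  qed
  then have "emeasure lebesgue (ball c e) = 0"
    using AE_iff_measurable[of "ball c e" lebesgue "\<lambda>p. p \<notin> ball c e"] by (auto simp: ball_def)
  moreover have "measure lborel (ball c e) > 0" using content_ball_pos[OF assms(3)] by simp
  ultimately show False by (simp add: measure_def)
qed

lemma nn_integral_indicator_strict_mono:
  fixes R :: "'a::euclidean_space \<Rightarrow> real"
  assumes R: "locally_integrable R" "\<And>p. R p > 0"
    and B: "closed B" "bounded B" "B \<subseteq> A" and U: "open U" "U \<subseteq> A" "\<not> U \<subseteq> B"
  shows "(\<integral>\<^sup>+ p. ennreal (R p) * indicator B p \<partial>lebesgue)
       < (\<integral>\<^sup>+ p. ennreal (R p) * indicator A p \<partial>lebesgue)"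
proof -
  obtain c where "c \<in> U - B" using U(3) by blast
  then obtain e where "e > 0" and e: "ball c e \<subseteq> U - B"
    using open_Diff[OF U(1) B(1)] open_contains_ball by blast
  have intB: "set_integrable lebesgue B R"
    using R B by (intro locally_integrable_set_integrable) (auto intro: less_imp_le borel_closed)
  then have measB: "(\<lambda>p. ennreal (R p) * indicator B p) \<in> borel_measurable lebesgue"
    and finB: "(\<integral>\<^sup>+ p. ennreal (R p) * indicator B p \<partial>lebesgue) \<noteq> \<infinity>"
    using set_integrable_nn_integral_finite[OF intB] by auto
  have "set_integrable lebesgue (ball c e) R"
    using R by (intro locally_integrable_set_integrable) (auto intro: less_imp_le)
  then have measU: "(\<lambda>p. ennreal (R p) * indicator (ball c e) p) \<in> borel_measurable lebesgue"
    by (rule set_integrable_nn_integral_finite)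
  have "(\<integral>\<^sup>+ p. ennreal (R p) * indicator B p \<partial>lebesgue)
      < (\<integral>\<^sup>+ p. ennreal (R p) * indicator B p \<partial>lebesgue)
        + (\<integral>\<^sup>+ p. ennreal (R p) * indicator (ball c e) p \<partial>lebesgue)"
    using ennreal_add_left_cancel_less[of _ 0] finB nn_integral_ball_pos[OF R \<open>e > 0\<close>] by simp
  also have "\<dots> = (\<integral>\<^sup>+ p. ennreal (R p) * indicator B p + ennreal (R p) * indicator (ball c e) p \<partial>lebesgue)"
    by (rule nn_integral_add[symmetric]) (use measB measU in auto)
  also have "\<dots> \<le> (\<integral>\<^sup>+ p. ennreal (R p) * indicator A p \<partial>lebesgue)"
    using e B(3) U(2) by (intro nn_integral_mono) (auto simp: indicator_def)
  finally show ?thesis .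
qed

lemma exists_min_minus_linear:
  fixes f :: "'a::euclidean_space \<Rightarrow> real"
  assumes "compact K" "K \<noteq> {}" "continuous_on K f"
  obtains x where "x \<in> K" "\<And>y. y \<in> K \<Longrightarrow> f x - p \<bullet> x \<le> f y - p \<bullet> y"
  using continuous_attains_inf[OF assms(1,2), of "\<lambda>y. f y - p \<bullet> y"]
    continuous_on_diff[OF assms(3) continuous_on_inner[OF continuous_on_const continuous_on_id]]
  by auto

lemma subdiff_set_comparison:
  fixes f h :: "'a::euclidean_space \<Rightarrow> real"
  assumes cf: "convex_on S f" "convex S" "open S" and K: "compact K" "K \<subseteq> S"
    and below: "\<And>y. y \<in> K \<Longrightarrow> f y \<le> h y"
    and outside: "\<And>x. x \<in> frontier K \<Longrightarrow> \<exists>r>0. \<forall>y \<in> ball x r - K. y \<in> S \<longrightarrow> h y \<le> f y"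
  shows "subdiff_set S h K \<subseteq> subdiff_set S f K"
proof
  fix p assume "p \<in> subdiff_set S h K"
  then obtain x where x: "x \<in> K" "p \<in> subdiff S h x" by (auto simp: subdiff_set_def)
  have "continuous_on K f"
    using convex_on_continuous[OF \<open>open S\<close> cf(1)] K(2) continuous_on_subset by blast
  then obtain xm where xm: "xm \<in> K" and min: "\<And>y. y \<in> K \<Longrightarrow> f xm - p \<bullet> xm \<le> f y - p \<bullet> y"
    using exists_min_minus_linear[OF K(1)] x(1) by blast
  obtain T where "xm \<in> interior T" "\<And>y. y \<in> S \<inter> T \<Longrightarrow> f xm - p \<bullet> xm \<le> f y - p \<bullet> y"
  proof (cases "xm \<in> interior K")
    case False
    then have "xm \<in> frontier K"
      using xm closure_subset by (auto simp: frontier_def)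
    then obtain r where "r > 0" and r: "\<forall>y \<in> ball xm r - K. y \<in> S \<longrightarrow> h y \<le> f y"
      using outside by blast
    have "f xm - p \<bullet> xm \<le> f y - p \<bullet> y" if y: "y \<in> S \<inter> (K \<union> ball xm r)" for y
    proof (cases "y \<in> K")
      case False
      have "f xm - p \<bullet> xm \<le> h x - p \<bullet> x" using min[OF x(1)] below[OF x(1)] by simp
      also have "\<dots> \<le> h y - p \<bullet> y" using x(2) y by (auto simp: subdiff_def inner_diff_right)
      also have "\<dots> \<le> f y - p \<bullet> y" using r y False by auto
      finally show ?thesis .
    qed (use min in blast)
    moreover have "xm \<in> interior (K \<union> ball xm r)"
      using interior_maximal[of "ball xm r" "K \<union> ball xm r"] \<open>r > 0\<close> by auto
    ultimately show ?thesis using that by blast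
  qed (use min in blast)
  then have "p \<in> subdiff S f xm" using local_min_imp_subdiff[OF cf(1,2)] xm K(2) by blast
  then show "p \<in> subdiff_set S f K" using xm by (auto simp: subdiff_set_def)
qed

text \<open>For slopes p close to g, the minimum of f - p over K cannot be attained on the frontier
  of K, so it is an interior local minimum.\<close>
lemma ball_subset_subdiff_set:
  fixes f :: "'a::euclidean_space \<Rightarrow> real"
  assumes cf: "convex_on S f" "convex S" "open S" and K: "compact K" "K \<subseteq> S"
    and frontier_above: "\<And>y. y \<in> frontier K \<Longrightarrow> c + g \<bullet> y \<le> f y"
    and w: "w \<in> K" "f w < c + g \<bullet> w"
  obtains \<delta> where "\<delta> > 0" "ball g \<delta> \<subseteq> subdiff_set S f K"
proof -
  define m where "m = c + g \<bullet> w - f w"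
  define D where "D = diameter K"
  define \<delta> where "\<delta> = m / (D + 1)"
  have "m > 0" using w(2) by (simp add: m_def)
  have "D \<ge> 0" using diameter_ge_0 compact_imp_bounded[OF K(1)] by (simp add: D_def)
  then have "\<delta> > 0" "\<delta> * D < m" using \<open>m > 0\<close> by (simp_all add: \<delta>_def field_simps)
  have "continuous_on K f"
    using convex_on_continuous[OF \<open>open S\<close> cf(1)] K(2) continuous_on_subset by blast
  have "p \<in> subdiff_set S f K" if p: "p \<in> ball g \<delta>" for p
  proof -
    obtain xm where xm: "xm \<in> K" and min: "\<And>y. y \<in> K \<Longrightarrow> f xm - p \<bullet> xm \<le> f y - p \<bullet> y"
      using exists_min_minus_linear[OF K(1) _ \<open>continuous_on K f\<close>] w(1) by blast
    have "xm \<notin> frontier K"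
    proof
      assume "xm \<in> frontier K"
      then have "c + g \<bullet> xm - p \<bullet> xm \<le> f w - p \<bullet> w"
        using frontier_above min[OF w(1)] by fastforce
      then have "m \<le> (p - g) \<bullet> (xm - w)" by (simp add: m_def inner_diff_left inner_diff_right)
      also have "\<dots> \<le> norm (p - g) * norm (xm - w)" by (rule norm_cauchy_schwarz)
      also have "\<dots> \<le> \<delta> * D"
          using p \<open>\<delta> > 0\<close> diameter_bounded_bound[OF compact_imp_bounded[OF K(1)] xm w(1)]
        by (intro mult_mono) (auto simp: D_def dist_norm norm_minus_commute)
      finally show False using \<open>\<delta> * D < m\<close> by simp
    qed
    then have "xm \<in> interior K"
      using xm compact_imp_closed[OF K(1)] by (auto simp: frontier_def)
    then have "p \<in> subdiff S f xm" using local_min_imp_subdiff[OF cf(1,2)] xm K(2) min by blast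
    then show ?thesis using xm by (auto simp: subdiff_set_def)
  qed
  then show ?thesis using that \<open>\<delta> > 0\<close> by blast
qed

lemma ball_subset_subdiff_set_at_contact:
  fixes f h :: "'a::euclidean_space \<Rightarrow> real"
  assumes cf: "convex_on S f" "convex S" "open S" and K: "compact K" "K \<subseteq> S"
    and frontier_below: "\<And>y. y \<in> frontier K \<Longrightarrow> h y \<le> f y"
    and x0: "x0 \<in> S" "f x0 \<le> h x0" and "r > 0"
    and outside: "\<forall>y \<in> ball x0 r - K. y \<in> S \<longrightarrow> h y \<le> f y"
    and g: "g \<in> subdiff S h x0" "g \<notin> subdiff S f x0"
  obtains \<delta> where "\<delta> > 0" "ball g \<delta> \<subseteq> subdiff_set S f K"
proof -
  have tangent: "h x0 + g \<bullet> (y - x0) \<le> h y" if "y \<in> S" for y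
    using g(1) that by (auto simp: subdiff_def)
  obtain w where w: "w \<in> S \<inter> ball x0 r" "f w - g \<bullet> w < f x0 - g \<bullet> x0"
    using local_min_imp_subdiff[OF cf(1,2) x0(1), of "ball x0 r" g] g(2) \<open>r > 0\<close>
    by (force simp: not_le)
  have "w \<in> K"
    using outside w tangent[of w] x0(2) by (force simp: inner_diff_right)
  show ?thesis
  proof (rule ball_subset_subdiff_set[OF cf K, of "h x0 - g \<bullet> x0" g w])
    show "h x0 - g \<bullet> x0 + g \<bullet> y \<le> f y" if "y \<in> frontier K" for y
      using that frontier_below tangent[of y] K(2) frontier_subset_closed[OF compact_imp_closed[OF K(1)]]
      by (force simp: inner_diff_right)
  qed (use \<open>w \<in> K\<close> w x0(2) that in auto)
qed

lemma open_segment_disjoint_subdiff_set: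
  fixes f h :: "'a::euclidean_space \<Rightarrow> real"
  assumes "K \<subseteq> S" and below: "\<And>y. y \<in> K \<Longrightarrow> f y \<le> h y"
    and x0: "x0 \<in> S" "f x0 = h x0" and grad: "subdiff S h x0 = {g}" and q: "q \<in> subdiff S f x0"
  shows "open_segment g q \<inter> subdiff_set S h K = {}"
proof -
  have "p \<notin> subdiff S h x" if seg: "p \<in> open_segment g q" and "x \<in> K" for p x
  proof
    assume px: "p \<in> subdiff S h x"
    obtain t where t: "0 < t" "t < 1" and p: "p = (1 - t) *\<^sub>R g + t *\<^sub>R q" and "g \<noteq> q"
      using seg by (auto simp: in_segment)
    have "x \<in> S" using \<open>x \<in> K\<close> \<open>K \<subseteq> S\<close> by blast
    define a where "a = g \<bullet> (x - x0)"
    define b where "b = q \<bullet> (x - x0)"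
    have pd: "p \<bullet> (x - x0) = (1 - t) * a + t * b" by (simp add: p a_def b_def inner_add_left)
    have up: "h x \<le> h x0 + p \<bullet> (x - x0)"
      using px x0(1) by (auto simp: subdiff_def inner_diff_right)
    have low: "h x0 + a \<le> h x" using grad \<open>x \<in> S\<close> by (auto simp: subdiff_def a_def)
    have "f x0 + b \<le> f x" using q \<open>x \<in> S\<close> by (auto simp: subdiff_def b_def)
    then have "b \<le> (1 - t) * a + t * b" using below[OF \<open>x \<in> K\<close>] up x0(2) pd by linarith
    then have "(1 - t) * (b - a) \<le> 0" by (simp add: algebra_simps)
    then have "b \<le> a" using t by (simp add: mult_le_0_iff)
    moreover have "t * (b - a) \<ge> 0" using low up pd by (simp add: algebra_simps)
    then have "a \<le> b" using t by (simp add: zero_le_mult_iff)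
    ultimately have hx: "h x = h x0 + p \<bullet> (x - x0)" using low up pd by (simp add: algebra_simps)
    have "p \<in> subdiff S h x0"
      unfolding subdiff_def
    proof clarify
      fix y assume "y \<in> S"
      then have "h x + p \<bullet> (y - x) \<le> h y" using px by (auto simp: subdiff_def)
      then show "h x0 + p \<bullet> (y - x0) \<le> h y" using hx by (simp add: inner_diff_right)
    qed
    then have "p = g" using grad by blast
    then show False using p t \<open>g \<noteq> q\<close> by (simp add: algebra_simps)
  qed
  then show ?thesis by (auto simp: subdiff_set_def)
qed

theorem lemma2p3:
  fixes \<Omega> Q :: "'a::euclidean_space set"
    and R z1 z2 :: "'a \<Rightarrow> real"
  assumes "open \<Omega>" "convex \<Omega>" "bounded \<Omega>"
    and "locally_integrable R" "\<And>p. R p > 0"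
    and "convex_on \<Omega> z1" "convex_on \<Omega> z2"
    and "open Q" "Q \<subseteq> \<Omega>" "closure Q \<subseteq> \<Omega>"
    and "\<And>x. x \<in> Q \<Longrightarrow> z1 x < z2 x"
    and "\<And>x. x \<in> frontier Q \<Longrightarrow> z1 x = z2 x"
    and "\<And>xQ. xQ \<in> frontier (closure Q) \<Longrightarrow>
           \<exists>r>0. cball xQ r \<subseteq> \<Omega> \<and> (\<forall>y \<in> ball xQ r - closure Q. z1 y \<ge> z2 y)"
    and "\<exists>x0 \<in> frontier (closure Q). \<exists>g.
           (z2 has_derivative (\<lambda>h. g \<bullet> h)) (at x0) \<and> g \<notin> subdiff \<Omega> z1 x0"
  shows "(\<integral>\<^sup>+ p. ennreal (R p) * indicator (subdiff_set \<Omega> z1 (closure Q)) p \<partial>lebesgue)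
       > (\<integral>\<^sup>+ p. ennreal (R p) * indicator (subdiff_set \<Omega> z2 (closure Q)) p \<partial>lebesgue)"
proof -
  define K where "K = closure Q"
  obtain x0 g where x0: "x0 \<in> frontier K" and dz2: "(z2 has_derivative (\<lambda>h. g \<bullet> h)) (at x0)"
    and g: "g \<notin> subdiff \<Omega> z1 x0"
    using assms(14) by (auto simp: K_def)
  have K: "compact K" "K \<subseteq> \<Omega>"
    using assms(3,10) bounded_subset by (auto simp: K_def compact_eq_bounded_closed)
  have "frontier K \<subseteq> frontier Q"
    using interior_mono[OF closure_subset[of Q]] by (auto simp: K_def frontier_def)
  then have touch: "z1 y = z2 y" if "y \<in> frontier K" for y
    using that assms(12) by blast
  have le: "z1 y \<le> z2 y" if "y \<in> K" for y
    using that assms(11,12) closure_Un_frontier[of Q] by (force simp: K_def)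
  have "x0 \<in> K" using x0 K(1) compact_imp_closed frontier_subset_closed by blast
  then have "x0 \<in> \<Omega>" using K(2) by blast
  have outside: "\<exists>r>0. \<forall>y \<in> ball x r - K. y \<in> \<Omega> \<longrightarrow> z2 y \<le> z1 y" if "x \<in> frontier K" for x
    using that assms(13) unfolding K_def by blast
  have grad: "subdiff \<Omega> z2 x0 = {g}" by (rule subdiff_eq_gradient[OF assms(7,2,1) \<open>x0 \<in> \<Omega>\<close> dz2])
  obtain r where "r > 0" and r: "\<forall>y \<in> ball x0 r - K. y \<in> \<Omega> \<longrightarrow> z2 y \<le> z1 y"
    using outside[OF x0] by blast
  then obtain \<delta> where "\<delta> > 0" and ball_A: "ball g \<delta> \<subseteq> subdiff_set \<Omega> z1 K"
    using ball_subset_subdiff_set_at_contact[OF assms(6,2,1) K _ \<open>x0 \<in> \<Omega>\<close> _ \<open>r > 0\<close> r _ g]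
      touch touch[OF x0] grad by auto
  obtain q where q: "q \<in> subdiff \<Omega> z1 x0" using subdiff_nonempty[OF assms(6,2,1) \<open>x0 \<in> \<Omega>\<close>] by blast
  then have "g \<in> closure (open_segment g q)" using g by auto
  then obtain p where "p \<in> open_segment g q" "dist p g < \<delta>"
    using \<open>\<delta> > 0\<close> closure_approachable by blast
  moreover have "open_segment g q \<inter> subdiff_set \<Omega> z2 K = {}"
    using open_segment_disjoint_subdiff_set[OF K(2) le \<open>x0 \<in> \<Omega>\<close> _ grad q] touch x0 by blast
  ultimately have "\<not> ball g \<delta> \<subseteq> subdiff_set \<Omega> z2 K" by (auto simp: dist_commute)
  have "continuous_on \<Omega> z2" by (rule convex_on_continuous[OF assms(1,7)])
  then show ?thesis
    unfolding K_def[symmetric]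
    using nn_integral_indicator_strict_mono[OF assms(4,5) subdiff_set_closed subdiff_set_bounded
        subdiff_set_comparison[OF assms(6,2,1) K le outside] open_ball ball_A] K assms(1)
      \<open>\<not> ball g \<delta> \<subseteq> _\<close> by blast
qed

end
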